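(* Fix $\alpha\in(0,1)$ and $\nu\in(0,\alpha)$. Assume $|\ell(f,z)|\le1$ for all $z$ and $f\in\mathcal F$. Define the data-dependent class $$\widehat{\mathcal F}^+_\nu=\left\{f\in\mathcal F: R_n(f,\mathcal D)\le R_n(\hat f,\mathcal D)+4\,\mathrm{Gap}_n(\mathcal F)+4\sqrt{\tfrac2n\log(1/\nu)}\right\}.$$ Then $$P\left\{R(\hat f,P)\le R_n(\hat f,\mathcal D)+\mathrm{Gap}_n(\widehat{\mathcal F}^+_\nu)+\sqrt{\tfrac2n\log\!\left(\tfrac1{\alpha-\nu}\right)}\right\}\ge1-\alpha.$$
   Context: $\mathcal D=\{z_i\}_{i=1}^n\sim P^n$ i.i.d.; $\mathcal F$ is a hypothesis class and $\ell(f,z)$ a loss. Empirical risk $R_n(f,\mathcal D)=\frac1n\sum_{i=1}^n\ell(f,z_i)$, population risk $R(f,P)=\mathbb E_{z\sim P}\ell(f,z)$, and $\hat f=\arg\min_{f\in\mathcal F}R_n(f,\mathcal D)$ (assumed to exist). $\mathrm{Gap}_n(\cdot)$ is a function on subclasses $\mathcal F'\subseteq\mathcal F$ such that for every fixed $\mathcal F'\subseteq\mathcal F$, $\mathrm{Gap}_n(\mathcal F')\ge\mathbb E\sup_{f\in\mathcal F'}|R(f,P)-R_n(f,\mathcal D)|$, and which is monotone: $\mathrm{Gap}_n(\mathcal F_1)\le\mathrm{Gap}_n(\mathcal F_2)$ whenever $\mathcal F_1\subseteq\mathcal F_2$ (e.g., twice the Rademacher complexity of $\{\ell(f,\cdot)\}_{f\in\mathcal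 F'}$). *)

theory Defs
  imports "HOL-Probability.Probability"
begin

definition emp_risk :: "nat \<Rightarrow> ('f \<Rightarrow> 'z \<Rightarrow> real) \<Rightarrow> 'f \<Rightarrow> (nat \<Rightarrow> 'z) \<Rightarrow> real" where
  "emp_risk n l f D = (\<Sum>i<n. l f (D i)) / real n"

definition pop_risk :: "'z measure \<Rightarrow> ('f \<Rightarrow> 'z \<Rightarrow> real) \<Rightarrow> 'f \<Rightarrow> real" where
  "pop_risk M l f = integral\<^sup>L M (l f)"

abbreviation sample_space :: "nat \<Rightarrow> 'z measure \<Rightarrow> (nat \<Rightarrow> 'z) measure" where
  "sample_space n M \<equiv> PiM {..<n} (\<lambda>_. M)"

text \<open>The data-dependent class F^+_nu (fh = the ERM on the sample D).\<close>
definition Fplus :: "nat \<Rightarrow> ('f \<Rightarrow> 'z \<Rightarrow> real) \<Rightarrow> 'f set \<Rightarrow> ('f set \<Rightarrow> real) \<Rightarrow> real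
    \<Rightarrow> 'f \<Rightarrow> (nat \<Rightarrow> 'z) \<Rightarrow> 'f set" where
  "Fplus n l F Gap \<nu> fh D = {f \<in> F. emp_risk n l f D \<le> emp_risk n l fh D + 4 * Gap F
      + 4 * sqrt (2 / real n * ln (1 / \<nu>))}"

end

theory Submission
  imports Defs
begin

text \<open>Let \<open>t = Gap F + \<surd>(2/n \<cdot> ln (1/\<nu>))\<close>. By McDiarmid's inequality the uniform deviation
  \<open>sup\<^sub>f |R f - R\<^sub>n f|\<close> over \<open>F\<close> is at most \<open>t\<close> with probability \<open>\<ge> 1 - \<nu>\<close>. On that event the
  empirical risk minimiser is \<open>2t\<close>-optimal for the population risk, and every \<open>2t\<close>-optimal
  hypothesis has empirical risk within \<open>4t\<close> of the minimiser, i.e. lies in \<open>F\<^sup>+\<^sub>\<nu>\<close>. The class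
  \<open>F\<^sub>0\<close> of \<open>2t\<close>-optimal hypotheses does not depend on the sample, so McDiarmid's inequality also
  bounds the uniform deviation over \<open>F\<^sub>0\<close> with confidence \<open>\<alpha> - \<nu>\<close>; monotonicity of \<open>Gap\<close>
  and a union bound conclude. McDiarmid's inequality is proved from Hoeffding's lemma by
  conditioning on the last coordinate of the sample.\<close>

definition bounded_differences :: "'z measure \<Rightarrow> nat \<Rightarrow> real \<Rightarrow> ((nat \<Rightarrow> 'z) \<Rightarrow> real) \<Rightarrow> bool" where
  "bounded_differences M n c g \<longleftrightarrow>
     (\<forall>D\<in>space (sample_space n M). \<forall>i<n. \<forall>z\<in>space M. \<bar>g (D(i:=z)) - g D\<bar> \<le> c)"

lemma sample_in_space:
  "D \<in> space (sample_space n M) \<Longrightarrow> i < n \<Longrightarrow> D i \<in> space M"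
  by (simp add: space_PiM PiE_iff)

lemma fun_upd_in_space_sample_space:
  assumes "D \<in> space (sample_space n M)" "i < n" "z \<in> space M"
  shows "D(i:=z) \<in> space (sample_space n M)"
  using assms by (auto simp: space_PiM PiE_def extensional_def)

lemma fun_upd_last_in_space_sample_space:
  assumes "D \<in> space (sample_space n M)" "z \<in> space M"
  shows "D(n:=z) \<in> space (sample_space (Suc n) M)"
  using assms by (auto simp: space_PiM PiE_def extensional_def less_Suc_eq)

context prob_space
begin

lemma Hoeffdings_lemma_oscillation:
  assumes l: "l > 0" and X: "X \<in> borel_measurable M"
    and osc: "\<And>x y. x \<in> space M \<Longrightarrow> y \<in> space M \<Longrightarrow> X x - X y \<le> c"
  shows "(\<integral>\<^sup>+x. ennreal (exp (l * (X x - expectation X))) \<partial>M) \<le> ennreal (exp (l\<^sup>2 * c\<^sup>2 / 8))"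
proof -
  obtain y where y: "y \<in> space M" using not_empty by blast
  define m where "m = (INF x\<in>space M. X x)"
  have bdd: "bdd_below (X ` space M)"
    using osc[OF y] by (intro bdd_belowI[where m = "X y - c"]) (force simp: algebra_simps)
  have "X x \<in> {m..m + c}" if x: "x \<in> space M" for x
  proof -
    have "m \<le> X x" unfolding m_def by (rule cINF_lower[OF bdd x])
    moreover have "X x - c \<le> m" unfolding m_def
      using osc[OF x] by (intro cINF_greatest) (force simp: not_empty algebra_simps)+
    ultimately show ?thesis by simp
  qed
  then interpret interval_bounded_random_variable M X m "m + c"
    by unfold_locales (auto intro: X)
  show ?thesis using Hoeffdings_lemma_nn_integral[OF l] by simp
qed

lemma measurable_fiber:
  assumes g: "g \<in> borel_measurable (sample_space (Suc n) M)" and D: "D \<in> space (sample_space n M)"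
  shows "(\<lambda>z. g (D(n:=z))) \<in> borel_measurable M"
proof -
  have "(\<lambda>z. D(n:=z)) \<in> measurable M (sample_space (Suc n) M)"
    unfolding lessThan_Suc by (rule measurable_component_update) (use D in auto)
  from measurable_comp[OF this g] show ?thesis by (simp add: comp_def)
qed

lemma integrable_fiber:
  fixes g :: "(nat \<Rightarrow> 'a) \<Rightarrow> real" and B :: real
  assumes g: "g \<in> borel_measurable (sample_space (Suc n) M)"
    and B: "\<And>D. D \<in> space (sample_space (Suc n) M) \<Longrightarrow> \<bar>g D\<bar> \<le> B"
    and D: "D \<in> space (sample_space n M)"
  shows "integrable M (\<lambda>z. g (D(n:=z)))"
  by (rule integrable_const_bound[where B = B])
     (auto intro!: AE_I2 B fun_upd_last_in_space_sample_space D measurable_fiber[OF g D])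

lemma measurable_fiber_average:
  fixes g :: "(nat \<Rightarrow> 'a) \<Rightarrow> real"
  assumes g: "g \<in> borel_measurable (sample_space (Suc n) M)"
  shows "(\<lambda>D. \<integral>z. g (D(n:=z)) \<partial>M) \<in> borel_measurable (sample_space n M)"
proof -
  have "(\<lambda>x. (fst x)(n := snd x)) \<in> measurable (sample_space n M \<Otimes>\<^sub>M M) (sample_space (Suc n) M)"
    unfolding lessThan_Suc by (rule measurable_fun_upd[where J = "{..<n}"]) auto
  from measurable_comp[OF this g]
  have "(\<lambda>(D, z). g (D(n:=z))) \<in> borel_measurable (sample_space n M \<Otimes>\<^sub>M M)"
    by (simp add: comp_def case_prod_beta)
  then show ?thesis
    using borel_measurable_lebesgue_integral[of "\<lambda>D z. g (D(n:=z))" "sample_space n M"] by simp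
qed

lemma abs_fiber_average_le:
  fixes g :: "(nat \<Rightarrow> 'a) \<Rightarrow> real" and B :: real
  assumes g: "g \<in> borel_measurable (sample_space (Suc n) M)"
    and B: "\<And>D. D \<in> space (sample_space (Suc n) M) \<Longrightarrow> \<bar>g D\<bar> \<le> B"
    and D: "D \<in> space (sample_space n M)"
  shows "\<bar>\<integral>z. g (D(n:=z)) \<partial>M\<bar> \<le> B"
proof -
  note int = integrable_fiber[OF g B D]
  have bound: "-B \<le> g (D(n:=z)) \<and> g (D(n:=z)) \<le> B" if "z \<in> space M" for z
    using B[OF fun_upd_last_in_space_sample_space[OF D that]] by linarith
  have "(\<integral>z. g (D(n:=z)) \<partial>M) \<le> B"
    by (intro integral_le_const int AE_I2) (auto dest: bound)
  moreover have "-B \<le> (\<integral>z. g (D(n:=z)) \<partial>M)"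
    by (intro integral_ge_const int AE_I2) (auto dest: bound)
  ultimately show ?thesis by simp
qed

lemma bounded_differences_fiber_average:
  fixes g :: "(nat \<Rightarrow> 'a) \<Rightarrow> real" and B :: real
  assumes g: "g \<in> borel_measurable (sample_space (Suc n) M)"
    and B: "\<And>D. D \<in> space (sample_space (Suc n) M) \<Longrightarrow> \<bar>g D\<bar> \<le> B"
    and c: "bounded_differences M (Suc n) c g"
  shows "bounded_differences M n c (\<lambda>D. \<integral>z. g (D(n:=z)) \<partial>M)"
  unfolding bounded_differences_def
proof (intro ballI allI impI)
  fix D i w assume D: "D \<in> space (sample_space n M)" and i: "i < n" and w: "w \<in> space M"
  have Dw: "D(i:=w) \<in> space (sample_space n M)"
    by (rule fun_upd_in_space_sample_space[OF D i w])
  have swap: "(D(i:=w))(n:=z) = (D(n:=z))(i:=w)" for z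
    using i by (simp add: fun_upd_twist)
  have int: "integrable M (\<lambda>z. g ((D(n:=z))(i:=w)) - g (D(n:=z)))"
    using integrable_fiber[OF g B Dw] integrable_fiber[OF g B D] by (simp add: swap)
  have bound: "\<bar>g ((D(n:=z))(i:=w)) - g (D(n:=z))\<bar> \<le> c" if "z \<in> space M" for z
    using c fun_upd_last_in_space_sample_space[OF D that] i w by (auto simp: bounded_differences_def)
  have "(\<integral>z. g ((D(n:=z))(i:=w)) - g (D(n:=z)) \<partial>M) \<le> c"
    by (intro integral_le_const int AE_I2) (use bound in force)
  moreover have "-c \<le> (\<integral>z. g ((D(n:=z))(i:=w)) - g (D(n:=z)) \<partial>M)"
    by (intro integral_ge_const int AE_I2) (use bound in force)
  moreover have "(\<integral>z. g ((D(i:=w))(n:=z)) \<partial>M) - (\<integral>z. g (D(n:=z)) \<partial>M)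
      = (\<integral>z. g ((D(n:=z))(i:=w)) - g (D(n:=z)) \<partial>M)"
    using integrable_fiber[OF g B Dw] integrable_fiber[OF g B D] by (simp add: swap)
  ultimately show "\<bar>(\<integral>z. g ((D(i:=w))(n:=z)) \<partial>M) - (\<integral>z. g (D(n:=z)) \<partial>M)\<bar> \<le> c"
    by simp
qed

lemma fiber_oscillation_le:
  assumes c: "bounded_differences M (Suc n) c g" and D: "D \<in> space (sample_space n M)"
    and x: "x \<in> space M" and y: "y \<in> space M"
  shows "g (D(n:=x)) - g (D(n:=y)) \<le> c"
  using c fun_upd_last_in_space_sample_space[OF D y] x
  by (force simp: bounded_differences_def dest: abs_le_D1)

lemma nn_integral_sample_space_Suc:
  assumes "f \<in> borel_measurable (sample_space (Suc n) M)"
  shows "integral\<^sup>N (sample_space (Suc n) M) f = (\<integral>\<^sup>+D. (\<integral>\<^sup>+z. f (D(n:=z)) \<partial>M) \<partial>sample_space n M)"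
proof -
  interpret product_sigma_finite "\<lambda>_::nat. M"
    by (simp add: product_sigma_finite_def sigma_finite_measure_axioms)
  show ?thesis using assms unfolding lessThan_Suc by (intro product_nn_integral_insert) auto
qed

lemma integral_sample_space_Suc:
  fixes f :: "(nat \<Rightarrow> 'a) \<Rightarrow> real"
  assumes "integrable (sample_space (Suc n) M) f"
  shows "integral\<^sup>L (sample_space (Suc n) M) f = (\<integral>D. (\<integral>z. f (D(n:=z)) \<partial>M) \<partial>sample_space n M)"
proof -
  interpret product_sigma_finite "\<lambda>_::nat. M"
    by (simp add: product_sigma_finite_def sigma_finite_measure_axioms)
  show ?thesis using assms unfolding lessThan_Suc by (intro product_integral_insert) auto
qed

lemma prob_Int_ge:
  assumes "A \<in> events" "B \<in> events"
  shows "prob A + prob B - 1 \<le> prob (A \<inter> B)"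
  using measure_Un3[of A M B] prob_le_1[of "A \<union> B"] assms by (simp add: fmeasurable_eq_sets)

lemma McDiarmid_mgf_bound:
  fixes g :: "(nat \<Rightarrow> 'a) \<Rightarrow> real" and B c l :: real
  assumes l: "l > 0"
  shows "g \<in> borel_measurable (sample_space n M) \<Longrightarrow>
    (\<And>D. D \<in> space (sample_space n M) \<Longrightarrow> \<bar>g D\<bar> \<le> B) \<Longrightarrow> bounded_differences M n c g \<Longrightarrow>
    (\<integral>\<^sup>+D. ennreal (exp (l * (g D - (\<integral>D. g D \<partial>sample_space n M)))) \<partial>sample_space n M)
      \<le> ennreal (exp (l\<^sup>2 * real n * c\<^sup>2 / 8))"
proof (induction n arbitrary: g)
  case 0
  show ?case
    by (simp add: PiM_empty lebesgue_integral_count_space_finite nn_integral_count_space_finite)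
next
  case (Suc n)
  note g = Suc.prems(1) and B = Suc.prems(2) and c = Suc.prems(3)
  define h where "h D = (\<integral>z. g (D(n:=z)) \<partial>M)" for D
  define E where "E = (\<integral>D. h D \<partial>sample_space n M)"
  have h: "h \<in> borel_measurable (sample_space n M)"
    unfolding h_def by (rule measurable_fiber_average[OF g])
  have IH: "(\<integral>\<^sup>+D. ennreal (exp (l * (h D - E))) \<partial>sample_space n M) \<le> ennreal (exp (l\<^sup>2 * real n * c\<^sup>2 / 8))"
    unfolding E_def h_def using abs_fiber_average_le[OF g B]
    by (intro Suc.IH measurable_fiber_average[OF g] bounded_differences_fiber_average[OF g B c]) auto
  interpret Q: prob_space "sample_space (Suc n) M" by (intro prob_space_PiM prob_space_axioms)
  have "integrable (sample_space (Suc n) M) g"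
    by (rule Q.integrable_const_bound[where B = B]) (auto intro!: AE_I2 B g)
  then have E: "(\<integral>D. g D \<partial>sample_space (Suc n) M) = E"
    unfolding E_def h_def by (rule integral_sample_space_Suc)
  have fiber_mgf: "(\<integral>\<^sup>+z. ennreal (exp (l * (g (D(n:=z)) - h D))) \<partial>M) \<le> ennreal (exp (l\<^sup>2 * c\<^sup>2 / 8))"
    if D: "D \<in> space (sample_space n M)" for D
    unfolding h_def
    by (rule Hoeffdings_lemma_oscillation[OF l measurable_fiber[OF g D] fiber_oscillation_le[OF c D]])
  have "(\<integral>\<^sup>+D. ennreal (exp (l * (g D - E))) \<partial>sample_space (Suc n) M)
      = (\<integral>\<^sup>+D. (\<integral>\<^sup>+z. ennreal (exp (l * (h D - E))) * ennreal (exp (l * (g (D(n:=z)) - h D))) \<partial>M)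
          \<partial>sample_space n M)"
  proof (subst nn_integral_sample_space_Suc)
    show "(\<lambda>D. ennreal (exp (l * (g D - E)))) \<in> borel_measurable (sample_space (Suc n) M)"
      using g by measurable
  qed (simp add: ennreal_mult[symmetric] exp_add[symmetric] algebra_simps)
  also have "\<dots> = (\<integral>\<^sup>+D. ennreal (exp (l * (h D - E)))
      * (\<integral>\<^sup>+z. ennreal (exp (l * (g (D(n:=z)) - h D))) \<partial>M) \<partial>sample_space n M)"
    by (intro nn_integral_cong nn_integral_cmult) (use measurable_fiber[OF g] in measurable)
  also have "\<dots> \<le> (\<integral>\<^sup>+D. ennreal (exp (l * (h D - E))) * ennreal (exp (l\<^sup>2 * c\<^sup>2 / 8)) \<partial>sample_space n M)"
    by (intro nn_integral_mono mult_left_mono fiber_mgf) auto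
  also have "\<dots> = (\<integral>\<^sup>+D. ennreal (exp (l * (h D - E))) \<partial>sample_space n M) * ennreal (exp (l\<^sup>2 * c\<^sup>2 / 8))"
    by (rule nn_integral_multc) (use h in measurable)
  also have "\<dots> \<le> ennreal (exp (l\<^sup>2 * real n * c\<^sup>2 / 8)) * ennreal (exp (l\<^sup>2 * c\<^sup>2 / 8))"
    by (rule mult_right_mono[OF IH]) simp
  also have "\<dots> = ennreal (exp (l\<^sup>2 * real (Suc n) * c\<^sup>2 / 8))"
    by (simp add: ennreal_mult[symmetric] exp_add[symmetric] algebra_simps add_divide_distrib)
  finally show ?case by (simp add: E)
qed

lemma McDiarmid_ineq_ge:
  fixes g :: "(nat \<Rightarrow> 'a) \<Rightarrow> real" and B c t :: real
  assumes n: "n > 0" and c: "c > 0" and t: "t > 0"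
    and g: "g \<in> borel_measurable (sample_space n M)"
    and B: "\<And>D. D \<in> space (sample_space n M) \<Longrightarrow> \<bar>g D\<bar> \<le> B"
    and bd: "bounded_differences M n c g"
  shows "measure (sample_space n M)
      {D \<in> space (sample_space n M). (\<integral>D. g D \<partial>sample_space n M) + t \<le> g D}
    \<le> exp (-2 * t\<^sup>2 / (real n * c\<^sup>2))"
proof -
  interpret P: prob_space "sample_space n M" by (intro prob_space_PiM prob_space_axioms)
  define E where "E = (\<integral>D. g D \<partial>sample_space n M)"
  define l where "l = 4 * t / (real n * c\<^sup>2)"
  have l: "l > 0" using n c t by (simp add: l_def)
  have "emeasure (sample_space n M) {D \<in> space (sample_space n M). t \<le> g D - E}
      \<le> ennreal (exp (-l * t))
        * (\<integral>\<^sup>+D. ennreal (exp (l * (g D - E))) * indicator (space (sample_space n M)) D \<partial>sample_space n M)"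
    by (rule Chernoff_ineq_nn_integral_ge[OF l]) (use g in auto)
  also have "(\<integral>\<^sup>+D. ennreal (exp (l * (g D - E))) * indicator (space (sample_space n M)) D \<partial>sample_space n M)
      = (\<integral>\<^sup>+D. ennreal (exp (l * (g D - E))) \<partial>sample_space n M)"
    by (rule nn_integral_cong) simp
  also have "\<dots> \<le> ennreal (exp (l\<^sup>2 * real n * c\<^sup>2 / 8))"
    unfolding E_def by (rule McDiarmid_mgf_bound[OF l g B bd])
  also have "ennreal (exp (-l * t)) * ennreal (exp (l\<^sup>2 * real n * c\<^sup>2 / 8))
      = ennreal (exp (-2 * t\<^sup>2 / (real n * c\<^sup>2)))"
  proof -
    have "-l * t + l\<^sup>2 * real n * c\<^sup>2 / 8 = -2 * t\<^sup>2 / (real n * c\<^sup>2)"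
      using n c by (simp add: l_def field_simps power2_eq_square)
    then show ?thesis by (simp add: ennreal_mult[symmetric] exp_add[symmetric])
  qed
  finally have "measure (sample_space n M) {D \<in> space (sample_space n M). t \<le> g D - E}
      \<le> exp (-2 * t\<^sup>2 / (real n * c\<^sup>2))"
    by (simp add: mult_left_mono P.emeasure_eq_measure)
  then show ?thesis by (simp add: E_def algebra_simps)
qed

lemma McDiarmid_confidence_bound:
  fixes g :: "(nat \<Rightarrow> 'a) \<Rightarrow> real" and B c \<delta> :: real
  assumes n: "n > 0" and c: "c > 0" and \<delta>: "0 < \<delta>" "\<delta> < 1"
    and g: "g \<in> borel_measurable (sample_space n M)"
    and B: "\<And>D. D \<in> space (sample_space n M) \<Longrightarrow> \<bar>g D\<bar> \<le> B"
    and bd: "bounded_differences M n c g"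
  shows "1 - \<delta> \<le> measure (sample_space n M) {D \<in> space (sample_space n M).
     g D \<le> (\<integral>D. g D \<partial>sample_space n M) + sqrt (real n * c\<^sup>2 / 2 * ln (1 / \<delta>))}"
proof -
  interpret P: prob_space "sample_space n M" by (intro prob_space_PiM prob_space_axioms)
  define E where "E = (\<integral>D. g D \<partial>sample_space n M)"
  define L where "L = ln (1 / \<delta>)"
  define t where "t = sqrt (real n * c\<^sup>2 / 2 * L)"
  have L: "L > 0" using \<delta> by (simp add: L_def)
  have t: "t > 0" using n c L by (simp add: t_def)
  define S where "S = {D \<in> space (sample_space n M). E + t \<le> g D}"
  have S: "S \<in> sets (sample_space n M)" unfolding S_def using g by measurable
  have "measure (sample_space n M) S \<le> exp (-2 * t\<^sup>2 / (real n * c\<^sup>2))"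
    unfolding S_def E_def by (rule McDiarmid_ineq_ge[OF n c t g B bd])
  also have "-2 * t\<^sup>2 / (real n * c\<^sup>2) = - L"
    using n c L by (simp add: t_def field_simps)
  also have "exp (- L) = \<delta>" using \<delta> by (simp add: L_def ln_div)
  finally have "1 - \<delta> \<le> measure (sample_space n M) (space (sample_space n M) - S)"
    using P.prob_compl[OF S] by simp
  also have "\<dots> \<le> measure (sample_space n M) {D \<in> space (sample_space n M). g D \<le> E + t}"
    by (rule P.finite_measure_mono) (use g in \<open>auto simp: S_def\<close>)
  finally show ?thesis by (simp add: E_def t_def L_def)
qed

end

lemma abs_cSUP_diff_le:
  fixes a b :: "'f \<Rightarrow> real"
  assumes "A \<noteq> {}" "bdd_above (a ` A)" "bdd_above (b ` A)" "\<And>x. x \<in> A \<Longrightarrow> \<bar>a x - b x\<bar> \<le> c"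
  shows "\<bar>(SUP x\<in>A. a x) - (SUP x\<in>A. b x)\<bar> \<le> c"
proof -
  have "(SUP x\<in>A. a x) \<le> (SUP x\<in>A. b x) + c"
  proof (rule cSUP_least[OF assms(1)])
    fix x assume x: "x \<in> A"
    have "b x \<le> (SUP x\<in>A. b x)" by (rule cSUP_upper[OF x assms(3)])
    then show "a x \<le> (SUP x\<in>A. b x) + c" using abs_le_D1[OF assms(4)[OF x]] by linarith
  qed
  moreover have "(SUP x\<in>A. b x) \<le> (SUP x\<in>A. a x) + c"
  proof (rule cSUP_least[OF assms(1)])
    fix x assume x: "x \<in> A"
    have "a x \<le> (SUP x\<in>A. a x)" by (rule cSUP_upper[OF x assms(2)])
    then show "b x \<le> (SUP x\<in>A. a x) + c" using abs_le_D2[OF assms(4)[OF x]] by linarith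
  qed
  ultimately show ?thesis by simp
qed

definition near_optimal :: "('f \<Rightarrow> real) \<Rightarrow> 'f set \<Rightarrow> real \<Rightarrow> 'f set" where
  "near_optimal R F t = {f \<in> F. R f \<le> (INF g\<in>F. R g) + t}"

lemma near_optimal_nonempty:
  assumes "F \<noteq> {}" "bdd_below (R ` F)" "t > 0"
  shows "near_optimal R F t \<noteq> {}"
proof -
  have "(INF g\<in>F. R g) < (INF g\<in>F. R g) + t" using assms(3) by simp
  then obtain f where "f \<in> F" "R f < (INF g\<in>F. R g) + t"
    using cINF_less_iff[OF assms(1,2)] by blast
  then have "f \<in> near_optimal R F t" by (simp add: near_optimal_def)
  then show ?thesis by blast
qed

lemma empirical_minimizer_near_optimal:
  assumes fh: "fh \<in> F" "\<And>f. f \<in> F \<Longrightarrow> Rn fh \<le> Rn f"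
    and dev: "\<And>f. f \<in> F \<Longrightarrow> \<bar>R f - Rn f\<bar> \<le> t"
  shows "fh \<in> near_optimal R F (2 * t)"
proof -
  have "R fh - 2 * t \<le> (INF g\<in>F. R g)"
  proof (rule cINF_greatest)
    fix f assume "f \<in> F"
    then show "R fh - 2 * t \<le> R f" using dev[of f] dev[OF fh(1)] fh(2)[of f] by linarith
  qed (use fh(1) in blast)
  then show ?thesis using fh by (simp add: near_optimal_def)
qed

lemma near_optimal_subset_empirical:
  assumes "bdd_below (R ` F)" "fh \<in> F"
    and dev: "\<And>f. f \<in> F \<Longrightarrow> \<bar>R f - Rn f\<bar> \<le> t"
  shows "near_optimal R F (2 * t) \<subseteq> {f \<in> F. Rn f \<le> Rn fh + 4 * t}"
proof
  fix f assume "f \<in> near_optimal R F (2 * t)"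
  then have f: "f \<in> F" "R f \<le> (INF g\<in>F. R g) + 2 * t" by (auto simp: near_optimal_def)
  have "(INF g\<in>F. R g) \<le> R fh" by (rule cINF_lower[OF assms(1,2)])
  then show "f \<in> {f \<in> F. Rn f \<le> Rn fh + 4 * t}"
    using f dev[OF f(1)] dev[OF assms(2)] by auto
qed

definition uniform_deviation :: "'z measure \<Rightarrow> nat \<Rightarrow> ('f \<Rightarrow> 'z \<Rightarrow> real) \<Rightarrow> 'f set \<Rightarrow> (nat \<Rightarrow> 'z) \<Rightarrow> real"
  where "uniform_deviation M n l F' D = (SUP f\<in>F'. \<bar>pop_risk M l f - emp_risk n l f D\<bar>)"

locale bounded_loss = prob_space M for M :: "'z measure" +
  fixes n :: nat and l :: "'f \<Rightarrow> 'z \<Rightarrow> real" and F :: "'f set"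
  assumes n_pos: "n > 0"
    and loss_measurable: "\<And>f. f \<in> F \<Longrightarrow> l f \<in> borel_measurable M"
    and abs_loss_le: "\<And>f z. f \<in> F \<Longrightarrow> z \<in> space M \<Longrightarrow> \<bar>l f z\<bar> \<le> 1"
begin

lemma abs_pop_risk_le:
  assumes f: "f \<in> F"
  shows "\<bar>pop_risk M l f\<bar> \<le> 1"
proof -
  have int: "integrable M (l f)"
    by (rule integrable_const_bound[where B = 1]) (auto intro!: AE_I2 abs_loss_le loss_measurable f)
  have bound: "-1 \<le> l f z \<and> l f z \<le> 1" if "z \<in> space M" for z
    using abs_loss_le[OF f that] by linarith
  have "pop_risk M l f \<le> 1"
    unfolding pop_risk_def by (intro integral_le_const int AE_I2) (auto dest: bound)
  moreover have "-1 \<le> pop_risk M l f"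
    unfolding pop_risk_def by (intro integral_ge_const int AE_I2) (auto dest: bound)
  ultimately show ?thesis by simp
qed

lemma abs_emp_risk_le:
  assumes f: "f \<in> F" and D: "D \<in> space (sample_space n M)"
  shows "\<bar>emp_risk n l f D\<bar> \<le> 1"
proof -
  have "\<bar>\<Sum>i<n. l f (D i)\<bar> \<le> (\<Sum>i<n. \<bar>l f (D i)\<bar>)" by (rule sum_abs)
  also have "\<dots> \<le> (\<Sum>i<n. 1)"
    by (intro sum_mono abs_loss_le[OF f] sample_in_space[OF D]) simp
  finally show ?thesis using n_pos by (simp add: emp_risk_def)
qed

lemma abs_risk_deviation_le:
  "f \<in> F \<Longrightarrow> D \<in> space (sample_space n M) \<Longrightarrow> \<bar>pop_risk M l f - emp_risk n l f D\<bar> \<le> 2"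
  using abs_pop_risk_le[of f] abs_emp_risk_le[of f D] by linarith

lemma abs_emp_risk_fun_upd_diff_le:
  assumes f: "f \<in> F" and D: "D \<in> space (sample_space n M)" and i: "i < n" and z: "z \<in> space M"
  shows "\<bar>emp_risk n l f (D(i:=z)) - emp_risk n l f D\<bar> \<le> 2 / real n"
proof -
  have "(\<Sum>k<n. l f ((D(i:=z)) k)) - (\<Sum>k<n. l f (D k)) = (\<Sum>k<n. l f ((D(i:=z)) k) - l f (D k))"
    by (simp add: sum_subtractf)
  also have "\<dots> = (\<Sum>k<n. if k = i then l f z - l f (D i) else 0)"
    by (rule sum.cong) auto
  also have "\<dots> = l f z - l f (D i)"
    using i by simp
  finally have "emp_risk n l f (D(i:=z)) - emp_risk n l f D = (l f z - l f (D i)) / real n"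
    by (simp add: emp_risk_def diff_divide_distrib[symmetric])
  moreover have "\<bar>l f z - l f (D i)\<bar> \<le> 2"
    using abs_loss_le[OF f z] abs_loss_le[OF f sample_in_space[OF D i]] by linarith
  ultimately show ?thesis using n_pos by (simp add: divide_right_mono)
qed

lemma bdd_above_risk_deviation:
  assumes "F' \<subseteq> F" "D \<in> space (sample_space n M)"
  shows "bdd_above ((\<lambda>f. \<bar>pop_risk M l f - emp_risk n l f D\<bar>) ` F')"
proof (rule bdd_aboveI2)
  fix f assume "f \<in> F'"
  then show "\<bar>pop_risk M l f - emp_risk n l f D\<bar> \<le> 2"
    using assms by (intro abs_risk_deviation_le) auto
qed

lemma risk_deviation_le_uniform_deviation:
  assumes "f \<in> F'" "F' \<subseteq> F" "D \<in> space (sample_space n M)"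
  shows "\<bar>pop_risk M l f - emp_risk n l f D\<bar> \<le> uniform_deviation M n l F' D"
  unfolding uniform_deviation_def by (rule cSUP_upper[OF assms(1) bdd_above_risk_deviation[OF assms(2,3)]])

lemma uniform_deviation_nonneg:
  assumes "F' \<subseteq> F" "F' \<noteq> {}" "D \<in> space (sample_space n M)"
  shows "0 \<le> uniform_deviation M n l F' D"
proof -
  obtain f where "f \<in> F'" using assms(2) by blast
  from risk_deviation_le_uniform_deviation[OF this assms(1,3)] show ?thesis by linarith
qed

lemma abs_uniform_deviation_le:
  assumes "F' \<subseteq> F" "F' \<noteq> {}" "D \<in> space (sample_space n M)"
  shows "\<bar>uniform_deviation M n l F' D\<bar> \<le> 2"
proof -
  have "uniform_deviation M n l F' D \<le> 2"
    unfolding uniform_deviation_def using assms by (intro cSUP_least) (auto intro: abs_risk_deviation_le)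
  then show ?thesis using uniform_deviation_nonneg[OF assms] by simp
qed

lemma bounded_differences_uniform_deviation:
  assumes F': "F' \<subseteq> F" "F' \<noteq> {}"
  shows "bounded_differences M n (2 / real n) (uniform_deviation M n l F')"
  unfolding bounded_differences_def
proof (intro ballI allI impI)
  fix D i z assume D: "D \<in> space (sample_space n M)" and i: "i < n" and z: "z \<in> space M"
  have Dz: "D(i:=z) \<in> space (sample_space n M)" by (rule fun_upd_in_space_sample_space[OF D i z])
  show "\<bar>uniform_deviation M n l F' (D(i:=z)) - uniform_deviation M n l F' D\<bar> \<le> 2 / real n"
    unfolding uniform_deviation_def
  proof (rule abs_cSUP_diff_le[OF F'(2) bdd_above_risk_deviation[OF F'(1) Dz] bdd_above_risk_deviation[OF F'(1) D]])
    fix f assume "f \<in> F'"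
    then have "\<bar>emp_risk n l f (D(i:=z)) - emp_risk n l f D\<bar> \<le> 2 / real n"
      using F'(1) by (intro abs_emp_risk_fun_upd_diff_le[OF _ D i z]) auto
    then show "\<bar>\<bar>pop_risk M l f - emp_risk n l f (D(i:=z))\<bar> - \<bar>pop_risk M l f - emp_risk n l f D\<bar>\<bar> \<le> 2 / real n"
      by linarith
  qed
qed

lemma uniform_deviation_confidence_bound:
  assumes F': "F' \<subseteq> F" "F' \<noteq> {}" and \<delta>: "0 < \<delta>" "\<delta> < 1"
    and meas: "uniform_deviation M n l F' \<in> borel_measurable (sample_space n M)"
    and G: "(\<integral>D. uniform_deviation M n l F' D \<partial>sample_space n M) \<le> G"
  shows "1 - \<delta> \<le> measure (sample_space n M) {D \<in> space (sample_space n M).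
     uniform_deviation M n l F' D \<le> G + sqrt (2 / real n * ln (1 / \<delta>))}"
proof -
  interpret P: prob_space "sample_space n M" by (intro prob_space_PiM prob_space_axioms)
  have "real n * (2 / real n)\<^sup>2 / 2 = 2 / real n"
    using n_pos by (simp add: power2_eq_square)
  then have "1 - \<delta> \<le> measure (sample_space n M) {D \<in> space (sample_space n M).
     uniform_deviation M n l F' D \<le> (\<integral>D. uniform_deviation M n l F' D \<partial>sample_space n M)
       + sqrt (2 / real n * ln (1 / \<delta>))}"
    using McDiarmid_confidence_bound[OF n_pos _ \<delta> meas abs_uniform_deviation_le[OF F']
        bounded_differences_uniform_deviation[OF F']] n_pos by simp
  also have "\<dots> \<le> measure (sample_space n M) {D \<in> space (sample_space n M).
     uniform_deviation M n l F' D \<le> G + sqrt (2 / real n * ln (1 / \<delta>))}"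
    by (rule P.finite_measure_mono) (use G meas in auto)
  finally show ?thesis .
qed

lemma bdd_below_pop_risk: "bdd_below (pop_risk M l ` F)"
  by (rule bdd_belowI2[where m = "-1"]) (use abs_pop_risk_le in \<open>force dest: abs_le_D2\<close>)

lemma integral_uniform_deviation_nonneg:
  "F' \<subseteq> F \<Longrightarrow> F' \<noteq> {} \<Longrightarrow> 0 \<le> (\<integral>D. uniform_deviation M n l F' D \<partial>sample_space n M)"
  by (rule integral_nonneg_AE) (auto intro!: AE_I2 uniform_deviation_nonneg)

lemma erm_near_optimal:
  assumes D: "D \<in> space (sample_space n M)"
    and erm: "fh \<in> F" "\<And>f. f \<in> F \<Longrightarrow> emp_risk n l fh D \<le> emp_risk n l f D"
    and t: "uniform_deviation M n l F D \<le> t"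
  shows "fh \<in> near_optimal (pop_risk M l) F (2 * t)"
    and "near_optimal (pop_risk M l) F (2 * t) \<subseteq> {f \<in> F. emp_risk n l f D \<le> emp_risk n l fh D + 4 * t}"
proof -
  have dev: "\<bar>pop_risk M l f - emp_risk n l f D\<bar> \<le> t" if "f \<in> F" for f
    using risk_deviation_le_uniform_deviation[OF that order_refl D] t by linarith
  show "fh \<in> near_optimal (pop_risk M l) F (2 * t)"
    using erm dev by (rule empirical_minimizer_near_optimal)
  show "near_optimal (pop_risk M l) F (2 * t) \<subseteq> {f \<in> F. emp_risk n l f D \<le> emp_risk n l fh D + 4 * t}"
    using bdd_below_pop_risk erm(1) dev by (rule near_optimal_subset_empirical)
qed

lemma erm_pop_risk_le_on_event:
  fixes Gap :: "'f set \<Rightarrow> real" and \<nu> s :: real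
  defines "t \<equiv> Gap F + sqrt (2 / real n * ln (1 / \<nu>))"
  assumes D: "D \<in> space (sample_space n M)"
    and erm: "fh \<in> F" "\<And>f. f \<in> F \<Longrightarrow> emp_risk n l fh D \<le> emp_risk n l f D"
    and gap_mono: "\<And>F1 F2. F1 \<subseteq> F2 \<Longrightarrow> F2 \<subseteq> F \<Longrightarrow> Gap F1 \<le> Gap F2"
    and dev: "uniform_deviation M n l F D \<le> t"
    and dev_near_optimal: "uniform_deviation M n l (near_optimal (pop_risk M l) F (2 * t)) D
      \<le> Gap (near_optimal (pop_risk M l) F (2 * t)) + s"
  shows "pop_risk M l fh \<le> emp_risk n l fh D + Gap (Fplus n l F Gap \<nu> fh D) + s"
proof -
  let ?F0 = "near_optimal (pop_risk M l) F (2 * t)"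
  note near = erm_near_optimal[OF D erm dev]
  have "?F0 \<subseteq> Fplus n l F Gap \<nu> fh D"
    using near(2) by (auto simp: Fplus_def t_def)
  then have "Gap ?F0 \<le> Gap (Fplus n l F Gap \<nu> fh D)"
    by (rule gap_mono) (auto simp: Fplus_def)
  moreover have "\<bar>pop_risk M l fh - emp_risk n l fh D\<bar> \<le> uniform_deviation M n l ?F0 D"
    using near(1) D by (intro risk_deviation_le_uniform_deviation) (auto simp: near_optimal_def)
  ultimately show ?thesis using dev_near_optimal by linarith
qed

end

theorem theorem7:
  fixes M :: "'z measure" and F :: "'f set" and l :: "'f \<Rightarrow> 'z \<Rightarrow> real"
    and n :: nat and Gap :: "'f set \<Rightarrow> real" and fhat :: "(nat \<Rightarrow> 'z) \<Rightarrow> 'f"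
    and \<alpha> \<nu> :: real
  assumes "prob_space M"
    and "n > 0"
    and "0 < \<alpha>" and "\<alpha> < 1" and "0 < \<nu>" and "\<nu> < \<alpha>"
    and loss_meas: "\<forall>f\<in>F. l f \<in> borel_measurable M"
    and loss_bdd: "\<forall>f\<in>F. \<forall>z\<in>space M. \<bar>l f z\<bar> \<le> 1"
    and sup_meas: "\<forall>F'. F' \<subseteq> F \<and> F' \<noteq> {} \<longrightarrow>
        (\<lambda>D. SUP f\<in>F'. \<bar>pop_risk M l f - emp_risk n l f D\<bar>) \<in> borel_measurable (sample_space n M)"
    and gap_bound: "\<forall>F'. F' \<subseteq> F \<and> F' \<noteq> {} \<longrightarrow>
        (\<integral>D. (SUP f\<in>F'. \<bar>pop_risk M l f - emp_risk n l f D\<bar>) \<partial>(sample_space n M)) \<le> Gap F'"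
    and gap_mono: "\<forall>F1 F2. F1 \<subseteq> F2 \<and> F2 \<subseteq> F \<longrightarrow> Gap F1 \<le> Gap F2"
    and erm: "\<forall>D\<in>space (sample_space n M). fhat D \<in> F \<and>
        (\<forall>f\<in>F. emp_risk n l (fhat D) D \<le> emp_risk n l f D)"
  shows "\<exists>A\<in>sets (sample_space n M).
     A \<subseteq> {D \<in> space (sample_space n M).
        pop_risk M l (fhat D) \<le> emp_risk n l (fhat D) D + Gap (Fplus n l F Gap \<nu> (fhat D) D)
          + sqrt (2 / real n * ln (1 / (\<alpha> - \<nu>)))}
     \<and> measure (sample_space n M) A \<ge> 1 - \<alpha>"
proof -
  interpret bounded_loss M n l F
    using assms(1,2) loss_meas loss_bdd unfolding bounded_loss_def bounded_loss_axioms_def by blast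
  interpret P: prob_space "sample_space n M" by (intro prob_space_PiM prob_space_axioms)
  define good where "good F' \<delta> = {D \<in> space (sample_space n M).
      uniform_deviation M n l F' D \<le> Gap F' + sqrt (2 / real n * ln (1 / \<delta>))}" for F' \<delta>
  have good: "good F' \<delta> \<in> P.events" "1 - \<delta> \<le> P.prob (good F' \<delta>)"
    if "F' \<subseteq> F" "F' \<noteq> {}" "0 < \<delta>" "\<delta> < 1" for F' \<delta>
  proof -
    have meas: "uniform_deviation M n l F' \<in> borel_measurable (sample_space n M)"
      using sup_meas that unfolding uniform_deviation_def by blast
    then show "good F' \<delta> \<in> P.events" unfolding good_def by measurable
    show "1 - \<delta> \<le> P.prob (good F' \<delta>)"
      using gap_bound that unfolding good_def uniform_deviation_def[symmetric]
      by (intro uniform_deviation_confidence_bound meas) auto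
  qed
  have "F \<noteq> {}" using erm P.not_empty by blast
  define t where "t = Gap F + sqrt (2 / real n * ln (1 / \<nu>))"
  have "0 < t"
    using integral_uniform_deviation_nonneg[OF order_refl \<open>F \<noteq> {}\<close>] gap_bound \<open>F \<noteq> {}\<close> assms(2,4-6)
    by (auto simp: t_def uniform_deviation_def intro!: add_nonneg_pos)
  define F0 where "F0 = near_optimal (pop_risk M l) F (2 * t)"
  have F0: "F0 \<subseteq> F" "F0 \<noteq> {}"
    using near_optimal_nonempty[OF \<open>F \<noteq> {}\<close> bdd_below_pop_risk] \<open>0 < t\<close> by (auto simp: F0_def near_optimal_def)
  have "good F \<nu> \<inter> good F0 (\<alpha> - \<nu>) \<subseteq> {D \<in> space (sample_space n M).
      pop_risk M l (fhat D) \<le> emp_risk n l (fhat D) D + Gap (Fplus n l F Gap \<nu> (fhat D) D)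
        + sqrt (2 / real n * ln (1 / (\<alpha> - \<nu>)))}"
  proof (intro subsetI CollectI conjI)
    fix D assume "D \<in> good F \<nu> \<inter> good F0 (\<alpha> - \<nu>)"
    then have D: "D \<in> space (sample_space n M)"
      and dev: "uniform_deviation M n l F D \<le> t"
      and dev0: "uniform_deviation M n l F0 D \<le> Gap F0 + sqrt (2 / real n * ln (1 / (\<alpha> - \<nu>)))"
      by (auto simp: good_def t_def)
    show "D \<in> space (sample_space n M)" by (fact D)
    have "\<And>F1 F2. F1 \<subseteq> F2 \<Longrightarrow> F2 \<subseteq> F \<Longrightarrow> Gap F1 \<le> Gap F2"
      using gap_mono by blast
    with D erm show "pop_risk M l (fhat D) \<le> emp_risk n l (fhat D) D + Gap (Fplus n l F Gap \<nu> (fhat D) D)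
        + sqrt (2 / real n * ln (1 / (\<alpha> - \<nu>)))"
      using dev dev0 unfolding F0_def t_def by (intro erm_pop_risk_le_on_event) auto
  qed
  moreover have "1 - \<alpha> \<le> P.prob (good F \<nu> \<inter> good F0 (\<alpha> - \<nu>))"
    using P.prob_Int_ge good[OF order_refl \<open>F \<noteq> {}\<close>, of \<nu>] good[OF F0, of "\<alpha> - \<nu>"] assms(3-6)
    by (smt (verit))
  moreover have "good F \<nu> \<inter> good F0 (\<alpha> - \<nu>) \<in> sets (sample_space n M)"
    using good(1)[OF order_refl \<open>F \<noteq> {}\<close>, of \<nu>] good(1)[OF F0, of "\<alpha> - \<nu>"] assms(3-6) by auto
  ultimately show ?thesis by blast
qed

end
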